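(* Let $(X,d)$ be a compact metric space and $f:X\to X$ a cw-expansive homeomorphism. If $x\in X$ is a sink of $f$ and the $\alpha$-limit set $\alpha(x)$ contains a point $z$ at which $X$ is locally connected, then $x$ is periodic.
   Context: A homeomorphism $f:X\to X$ of a compact metric space is continuum-wise expansive (cw-expansive) if there is a constant $c>0$ such that $\sup_{n\in\mathbb Z}\operatorname{diam} f^n(C)>c$ for every continuum $C\subset X$ containing more than one point. For $\varepsilon>0$ and $x\in X$: $W^s_\varepsilon(x)=\{y\in X:\ d(f^n(x),f^n(y))\le\varepsilon \text{ for all } n\ge 0\}$ and $W^s(x)=\{y\in X:\ d(f^n(x),f^n(y))\to 0 \text{ as } n\to\infty\}$. A point $x$ is a weak sink if $W^s_\varepsilon(x)$ is a neighborhood of $x$ for every $\varepsilon>0$; $x$ is a sink if it is a weak sink and there exists $\varepsilon>0$ with $W^s_\varepsilon(x)\subset W^s(x)$. The $\alpha$-limit set $\alpha(x)$ is the set of limits of sequences $f^{-n_k}(x)$ with $n_k\to\infty$. $X$ is locally connected at $z$ if every neighborhood of $z$ contains a connected neighborhood of $z$. *)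

theory Defs
  imports "HOL-Analysis.Analysis"
begin

definition zit :: "('a \<Rightarrow> 'a) \<Rightarrow> ('a \<Rightarrow> 'a) \<Rightarrow> int \<Rightarrow> 'a \<Rightarrow> 'a" where
  "zit f g n = (if n \<ge> 0 then f ^^ nat n else g ^^ nat (- n))"

definition cw_expansive :: "'a::metric_space set \<Rightarrow> ('a \<Rightarrow> 'a) \<Rightarrow> ('a \<Rightarrow> 'a) \<Rightarrow> bool" where
  "cw_expansive X f g \<longleftrightarrow> (\<exists>c>0. \<forall>C. C \<subseteq> X \<and> compact C \<and> connected C \<and> (\<exists>a\<in>C. \<exists>b\<in>C. a \<noteq> b)
      \<longrightarrow> (SUP n\<in>(UNIV::int set). ereal (diameter (zit f g n ` C))) > ereal c)"

definition local_stable_set :: "'a::metric_space set \<Rightarrow> ('a \<Rightarrow> 'a) \<Rightarrow> real \<Rightarrow> 'a \<Rightarrow> 'a set" where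
  "local_stable_set X f e x = {y\<in>X. \<forall>n. dist ((f ^^ n) x) ((f ^^ n) y) \<le> e}"

definition stable_set :: "'a::metric_space set \<Rightarrow> ('a \<Rightarrow> 'a) \<Rightarrow> 'a \<Rightarrow> 'a set" where
  "stable_set X f x = {y\<in>X. (\<lambda>n. dist ((f ^^ n) x) ((f ^^ n) y)) \<longlonglongrightarrow> 0}"

definition nbhd_in :: "'a::metric_space set \<Rightarrow> 'a set \<Rightarrow> 'a \<Rightarrow> bool" where
  "nbhd_in X N x \<longleftrightarrow> N \<subseteq> X \<and> (\<exists>U. openin (top_of_set X) U \<and> x \<in> U \<and> U \<subseteq> N)"

definition weak_sink :: "'a::metric_space set \<Rightarrow> ('a \<Rightarrow> 'a) \<Rightarrow> 'a \<Rightarrow> bool" where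
  "weak_sink X f x \<longleftrightarrow> (\<forall>e>0. nbhd_in X (local_stable_set X f e x) x)"

definition sink :: "'a::metric_space set \<Rightarrow> ('a \<Rightarrow> 'a) \<Rightarrow> 'a \<Rightarrow> bool" where
  "sink X f x \<longleftrightarrow> weak_sink X f x \<and> (\<exists>e>0. local_stable_set X f e x \<subseteq> stable_set X f x)"

definition alpha_limit :: "('a::metric_space \<Rightarrow> 'a) \<Rightarrow> 'a \<Rightarrow> 'a set" where
  "alpha_limit g x = {z. \<exists>r. strict_mono r \<and> (\<lambda>k. (g ^^ r k) x) \<longlonglongrightarrow> z}"

definition space_locally_connected_at :: "'a::topological_space set \<Rightarrow> 'a \<Rightarrow> bool" where
  "space_locally_connected_at X z \<longleftrightarrow> (\<forall>N. N \<subseteq> X \<and> (\<exists>U. openin (top_of_set X) U \<and> z \<in> U \<and> U \<subseteq> N) \<longrightarrow>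
      (\<exists>C. C \<subseteq> N \<and> connected C \<and> (\<exists>U. openin (top_of_set X) U \<and> z \<in> U \<and> U \<subseteq> C)))"

end

theory Submission
  imports Defs
begin

text \<open>
  Suppose x is not recurrent. Local connectedness at z \<in> \<alpha>(x) gives a small continuum K
  around z containing two backward iterates g^m x and g^n x with n - m large, so Y = f^n(K) is a
  continuum through x and the far point f^(n-m) x whose f^n-preimage is small. By boundary
  bumping, the component A of x in the set of points of Y that stay \<rho>-close to x along the
  backward orbit up to time n reaches the boundary of that set. But A c/2-shadows x forward
  (x is a weak sink) and backward up to time n, so cw-expansivity, together with uniform
  continuity of the first iterates after time -n, forces A to stay strictly \<rho>-close: a
  contradiction. Hence x is recurrent, and a recurrent sink is periodic: some iterate f^p x lies
  in the stable set of x, and recurrence then forces d(f^p x, x) = 0.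
\<close>

section \<open>Iterates of a homeomorphism\<close>

lemma homeomorphism_image_mem: "homeomorphism S T f g \<Longrightarrow> x \<in> S \<Longrightarrow> f x \<in> T"
  unfolding homeomorphism_def by blast

lemma homeomorphism_funpow:
  assumes "homeomorphism X X f g"
  shows "homeomorphism X X (f ^^ n) (g ^^ n)"
proof (induction n)
  case 0
  show ?case by (simp add: homeomorphism_def)
next
  case (Suc n)
  have "homeomorphism X X (f \<circ> f ^^ n) (g ^^ n \<circ> g)"
    using Suc.IH assms by (rule homeomorphism_compose)
  moreover have "f ^^ Suc n = f \<circ> f ^^ n" "g ^^ Suc n = g ^^ n \<circ> g"
    by (simp, rule funpow_Suc_right)
  ultimately show ?case by (simp only:)
qed

lemma homeomorphism_funpow_mem:
  assumes "homeomorphism X X f g" "y \<in> X"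
  shows "(f ^^ n) y \<in> X" "(g ^^ n) y \<in> X"
  using homeomorphism_image_mem homeomorphism_funpow homeomorphism_symD assms by metis+

lemma zit_of_nat [simp]: "zit f g (int n) = f ^^ n"
  by (simp add: zit_def)

lemma zit_of_neg_nat [simp]: "zit f g (- int n) = g ^^ n"
  unfolding zit_def by (cases "n = 0") auto

lemma homeomorphism_zit:
  assumes "homeomorphism X X f g"
  shows "homeomorphism X X (zit f g n) (zit f g (- n))"
proof (cases "n \<ge> 0")
  case True
  then obtain k where "n = int k"
    by (intro that[of "nat n"]) simp
  then show ?thesis
    using homeomorphism_funpow[OF assms, of k] by simp
next
  case False
  then obtain k where "n = - int k"
    by (intro that[of "nat (- n)"]) simp
  then show ?thesis
    using homeomorphism_symD[OF homeomorphism_funpow[OF assms, of k]] by simp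
qed

lemma zit_plus_1:
  assumes "homeomorphism X X f g" "y \<in> X"
  shows "zit f g (n + 1) y = f (zit f g n y)"
proof (cases "n \<ge> 0")
  case True
  then have "nat (n + 1) = Suc (nat n)" by simp
  with True show ?thesis by (simp add: zit_def)
next
  case False
  then have "nat (- n) = Suc (nat (- (n + 1)))" by simp
  moreover have "(g ^^ nat (- (n + 1))) y \<in> X"
    using homeomorphism_funpow_mem[OF assms] by blast
  ultimately show ?thesis
    using False assms(1) by (simp add: zit_def homeomorphism_apply2)
qed

lemma zit_minus_1:
  assumes "homeomorphism X X f g" "y \<in> X"
  shows "zit f g (n - 1) y = g (zit f g n y)"
proof -
  have "zit f g (n - 1) y \<in> X"
    using homeomorphism_image_mem[OF homeomorphism_zit[OF assms(1)] assms(2)] .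
  then have "g (zit f g n y) = g (f (zit f g (n - 1) y))"
    using zit_plus_1[OF assms, of "n - 1"] by simp
  also have "\<dots> = zit f g (n - 1) y"
    using \<open>zit f g (n - 1) y \<in> X\<close> assms(1) by (simp add: homeomorphism_apply1)
  finally show ?thesis by simp
qed

lemma zit_add:
  assumes "homeomorphism X X f g" "y \<in> X"
  shows "zit f g (m + n) y = zit f g m (zit f g n y)"
proof -
  have "zit f g n y \<in> X"
    using homeomorphism_image_mem[OF homeomorphism_zit[OF assms(1)] assms(2)] .
  then show ?thesis
  proof (induction m rule: int_induct[of _ 0])
    case base
    show ?case by (simp add: zit_def)
  next
    case (step1 i)
    then show ?case
      using zit_plus_1[OF assms, of "i + n"] zit_plus_1[OF assms(1), of "zit f g n y" i]
      by (simp add: algebra_simps)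
  next
    case (step2 i)
    then show ?case
      using zit_minus_1[OF assms, of "i + n"] zit_minus_1[OF assms(1), of "zit f g n y" i]
      by (simp add: algebra_simps)
  qed
qed

lemma funpow_image_subset: "f ` X \<subseteq> X \<Longrightarrow> (f ^^ n) ` X \<subseteq> X"
  by (induction n) auto

lemma continuous_on_funpow:
  assumes "continuous_on X f" "f ` X \<subseteq> X"
  shows "continuous_on X (f ^^ n)"
proof (induction n)
  case (Suc n)
  show ?case
    using continuous_on_compose2[OF assms(1) Suc.IH funpow_image_subset[OF assms(2)]] by simp
qed simp

lemma uniformly_equicontinuous_funpow:
  fixes f :: "'a::metric_space \<Rightarrow> 'a"
  assumes X: "compact X" "continuous_on X f" "f ` X \<subseteq> X" and "\<mu> > 0"
  shows "\<exists>\<eta>>0. \<forall>i<N. \<forall>u\<in>X. \<forall>v\<in>X. dist u v < \<eta> \<longrightarrow> dist ((f ^^ i) u) ((f ^^ i) v) < \<mu>"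
proof (induction N)
  case 0
  show ?case by (auto intro: exI[of _ 1])
next
  case (Suc N)
  then obtain \<eta>1 where \<eta>1: "\<eta>1 > 0"
    "\<forall>i<N. \<forall>u\<in>X. \<forall>v\<in>X. dist u v < \<eta>1 \<longrightarrow> dist ((f ^^ i) u) ((f ^^ i) v) < \<mu>"
    by blast
  have "uniformly_continuous_on X (f ^^ N)"
    using compact_uniformly_continuous continuous_on_funpow X by blast
  then obtain \<eta>2 where \<eta>2: "\<eta>2 > 0"
    "\<forall>u\<in>X. \<forall>v\<in>X. dist v u < \<eta>2 \<longrightarrow> dist ((f ^^ N) v) ((f ^^ N) u) < \<mu>"
    unfolding uniformly_continuous_on_def using \<open>\<mu> > 0\<close> by blast
  have "\<forall>i<Suc N. \<forall>u\<in>X. \<forall>v\<in>X. dist u v < min \<eta>1 \<eta>2 \<longrightarrow> dist ((f ^^ i) u) ((f ^^ i) v) < \<mu>"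
    using \<eta>1(2) \<eta>2(2) by (auto simp: less_Suc_eq)
  then show ?case
    using \<eta>1(1) \<eta>2(1) by (intro exI[of _ "min \<eta>1 \<eta>2"]) simp
qed

section \<open>Topological upper limits of sequences of sets\<close>

lemma compact_decseq_subset_open:
  fixes K :: "nat \<Rightarrow> 'a::t2_space set"
  assumes K: "\<And>m. compact (K m)" "decseq K" and W: "open W" "(\<Inter>m. K m) \<subseteq> W"
  shows "\<exists>m. K m \<subseteq> W"
proof (rule ccontr)
  assume "\<nexists>m. K m \<subseteq> W"
  have "K 0 \<inter> (\<Inter>m. K m - W) \<noteq> {}"
  proof (rule compact_imp_fip_image[OF K(1)])
    show "closed (K m - W)" for m
      using K(1) W(1) by (simp add: closed_Diff compact_imp_closed)
    fix I :: "nat set" assume "finite I"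
    define M where "M = Max (insert 0 I)"
    have "K M \<subseteq> K i" if "i \<in> insert 0 I" for i
      using K(2) \<open>finite I\<close> that unfolding M_def by (simp add: decseqD)
    then have "K M - W \<subseteq> K 0 \<inter> (\<Inter>i\<in>I. K i - W)"
      by blast
    moreover have "K M - W \<noteq> {}"
      using \<open>\<nexists>m. K m \<subseteq> W\<close> by blast
    ultimately show "K 0 \<inter> (\<Inter>i\<in>I. K i - W) \<noteq> {}"
      by blast
  qed
  then show False using W(2) by blast
qed

definition upper_limit :: "(nat \<Rightarrow> 'a::topological_space set) \<Rightarrow> 'a set" where
  "upper_limit B = (\<Inter>m. closure (\<Union>i\<in>{m..}. B i))"

lemma closed_upper_limit: "closed (upper_limit B)"
  by (auto simp: upper_limit_def)

lemma upper_limit_subset_closed: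
  assumes "closed F" "eventually (\<lambda>i. B i \<subseteq> F) sequentially"
  shows "upper_limit B \<subseteq> F"
proof -
  obtain m where "\<And>i. i \<ge> m \<Longrightarrow> B i \<subseteq> F"
    using assms(2) by (auto simp: eventually_sequentially)
  then have "closure (\<Union>i\<in>{m..}. B i) \<subseteq> F"
    using assms(1) by (intro closure_minimal) auto
  then show ?thesis by (auto simp: upper_limit_def)
qed

lemma limit_in_upper_limit:
  assumes "s \<longlonglongrightarrow> l" "\<And>i. s i \<in> B i"
  shows "l \<in> upper_limit B"
  unfolding upper_limit_def
proof
  fix m
  have "s i \<in> (\<Union>j\<in>{m..}. B j)" if "i \<ge> m" for i
    using assms(2)[of i] that by blast
  then have "\<forall>\<^sub>F i in sequentially. s i \<in> closure (\<Union>j\<in>{m..}. B j)"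
    unfolding eventually_sequentially using closure_subset by blast
  then show "l \<in> closure (\<Union>i\<in>{m..}. B i)"
    using assms(1) by (intro Lim_in_closed_set) auto
qed

lemma connected_upper_limit:
  fixes B :: "nat \<Rightarrow> 'a::t4_space set"
  assumes B: "\<And>i. B i \<subseteq> K" "compact K" "\<And>i. connected (B i)"
    and w: "\<And>i. w i \<in> B i" "w \<longlonglongrightarrow> w0"
  shows "connected (upper_limit B)"
proof -
  define L where "L = upper_limit B"
  have "w0 \<in> L"
    unfolding L_def using w by (rule limit_in_upper_limit[rotated])
  have False if P: "closed P" "w0 \<in> P" and Q: "closed Q" "Q \<noteq> {}" and "P \<union> Q = L" "P \<inter> Q = {}" for P Q
  proof -
    obtain U V where UV: "open U" "open V" "P \<subseteq> U" "Q \<subseteq> V" "U \<inter> V = {}"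
      using t4_space[OF P(1) Q(1) \<open>P \<inter> Q = {}\<close>] by blast
    define T where "T m = closure (\<Union>i\<in>{m..}. B i)" for m
    have "compact (T m)" for m
    proof -
      have "T m \<subseteq> K"
        unfolding T_def using B(1,2) by (simp add: UN_least closure_minimal compact_imp_closed)
      then show ?thesis
        using compact_Int_closed[OF B(2), of "T m"] by (simp add: T_def Int_absorb1)
    qed
    moreover have "decseq T"
      unfolding T_def decseq_def by (intro allI impI closure_mono) (auto intro: order_trans)
    moreover have "(\<Inter>m. T m) \<subseteq> U \<union> V"
      using UV \<open>P \<union> Q = L\<close> unfolding L_def T_def upper_limit_def by blast
    ultimately obtain m where m: "T m \<subseteq> U \<union> V"
      using compact_decseq_subset_open UV(1,2) by (metis open_Un)
    have "\<forall>\<^sub>F i in sequentially. w i \<in> U"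
      using w(2) UV(1,3) P(2) by (simp add: tendsto_def subset_iff)
    then obtain k where k: "\<And>i. i \<ge> k \<Longrightarrow> w i \<in> U"
      by (auto simp: eventually_sequentially)
    have "B i \<subseteq> U" if "i \<ge> max k m" for i
    proof -
      have "B i \<subseteq> (\<Union>j\<in>{m..}. B j)"
        using that by auto
      then have "B i \<subseteq> T m"
        using closure_subset unfolding T_def by blast
      then have "B i \<subseteq> U \<union> V"
        using m by blast
      moreover have "B i \<inter> U \<noteq> {}"
        using k w(1) that by auto
      ultimately show ?thesis
        using connectedD[OF B(3) UV(1,2)] UV(5) by blast
    qed
    then have "\<forall>\<^sub>F i in sequentially. B i \<subseteq> closure U"
      unfolding eventually_sequentially using closure_subset by blast
    then have "L \<subseteq> closure U"
      unfolding L_def by (simp add: upper_limit_subset_closed)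
    moreover have "V \<inter> closure U = {}"
      using UV(2,5) open_Int_closure_eq_empty[of V U] by (simp add: Int_commute)
    ultimately show False
      using UV(4) \<open>P \<union> Q = L\<close> Q(2) by blast
  qed
  then show ?thesis
    unfolding connected_closed_set[OF closed_upper_limit] L_def
    using \<open>w0 \<in> L\<close> unfolding L_def by blast
qed

lemma upper_limit_image_subset_cball:
  fixes h :: "'a::metric_space \<Rightarrow> 'b::metric_space"
  assumes h: "continuous_on X h" "closed X" and B: "\<And>i. B i \<subseteq> X"
    and w: "\<And>i. w i \<in> X" "w \<longlonglongrightarrow> w0" "w0 \<in> X"
    and close: "\<forall>\<^sub>F i in sequentially. h ` B i \<subseteq> cball (h (w i)) \<rho>"
  shows "h ` upper_limit B \<subseteq> cball (h w0) \<rho>"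
proof -
  have approx: "dist (h w0) (h y) \<le> \<rho> + \<epsilon>" if "y \<in> upper_limit B" "\<epsilon> > 0" for y \<epsilon>
  proof -
    have "(\<lambda>i. h (w i)) \<longlonglongrightarrow> h w0"
      using continuous_on_tendsto_compose[OF h(1) w(2,3)] w(1) by simp
    then have "\<forall>\<^sub>F i in sequentially. dist (h (w i)) (h w0) < \<epsilon>"
      using \<open>\<epsilon> > 0\<close> by (rule tendstoD)
    with close have "\<forall>\<^sub>F i in sequentially. B i \<subseteq> X \<inter> h -` cball (h w0) (\<rho> + \<epsilon>)"
    proof eventually_elim
      case (elim i)
      have "dist (h w0) (h b) \<le> \<rho> + \<epsilon>" if "b \<in> B i" for b
        using elim that dist_triangle[of "h w0" "h b" "h (w i)"] by (force simp: dist_commute)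
      then show ?case using B by auto
    qed
    then have "upper_limit B \<subseteq> X \<inter> h -` cball (h w0) (\<rho> + \<epsilon>)"
      by (rule upper_limit_subset_closed[OF continuous_closed_preimage[OF h closed_cball]])
    then show ?thesis using that by auto
  qed
  show ?thesis
  proof
    fix v assume "v \<in> h ` upper_limit B"
    then obtain y where y: "y \<in> upper_limit B" "v = h y"
      by blast
    have "dist (h w0) (h y) \<le> \<rho>"
      using approx[OF y(1)] by (rule field_le_epsilon)
    then show "v \<in> cball (h w0) \<rho>"
      using y(2) by simp
  qed
qed

section \<open>Continua\<close>

lemma boundary_bumping_continuum:
  fixes Y :: "'a::metric_space set"
  assumes Y: "compact Y" "connected Y" and S: "closed S" "S \<subset> Y" "x \<in> S"
    and U: "openin (top_of_set Y) U" "U \<subseteq> S"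
  shows "\<exists>A. compact A \<and> connected A \<and> x \<in> A \<and> A \<subseteq> S \<and> \<not> A \<subseteq> U"
proof -
  define A where "A = connected_component_of_set (top_of_set S) x"
  have "subtopology (top_of_set Y) S = top_of_set S"
    using S(2) by (simp add: subtopology_subtopology Int_absorb1)
  then have "A \<inter> (top_of_set Y) frontier_of S \<noteq> {}"
    unfolding A_def
  proof (intro boundary_bumping_theorem_closed)
    show "connected_space (top_of_set Y)" "compact_space (top_of_set Y)"
      using Y by (simp_all add: connected_space_subtopology compact_space_subtopology)
    show "Hausdorff_space (top_of_set Y)"
      by (rule Hausdorff_space_subtopology[OF Hausdorff_space_euclidean])
    show "closedin (top_of_set Y) S"
      using S(1,2) by (simp add: closed_subset)
    show "S \<noteq> topspace (top_of_set Y)"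
      using S(2) by auto
    show "connected_component_of_set (top_of_set S) x
      \<in> connected_components_of (subtopology (top_of_set Y) S)"
      using S(3) \<open>subtopology (top_of_set Y) S = top_of_set S\<close>
      by (simp add: connected_component_in_connected_components_of)
  qed
  moreover have "U \<subseteq> (top_of_set Y) interior_of S"
    using U by (simp add: interior_of_maximal)
  ultimately have "\<not> A \<subseteq> U"
    unfolding frontier_of_def by blast
  moreover have "A \<subseteq> S" "x \<in> A" "connected A"
    using S(3) connectedin_connected_component_of[of "top_of_set S" x]
    unfolding A_def by (auto simp: connected_component_of_refl connectedin_subtopology
        connected_component_of_subset_topspace)
  moreover have "compact A"
  proof -
    have "closed A"
      using closedin_connected_component_of S(1) unfolding A_def by (rule closedin_closed_trans)
    moreover have "A \<subseteq> Y"
      using \<open>A \<subseteq> S\<close> S(2) by blast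
    ultimately show ?thesis
      using compact_Int_closed[OF Y(1)] by (metis inf.absorb_iff2)
  qed
  ultimately show ?thesis by blast
qed

lemma backward_ball_boundary_continuum:
  fixes Y :: "'a::metric_space set"
  assumes g: "continuous_on X g" "g ` X \<subseteq> X"
    and Y: "Y \<subseteq> X" "compact Y" "connected Y" "x \<in> Y" "y \<in> Y" and "0 \<le> \<rho>" "\<rho> < dist x y"
  shows "\<exists>A. compact A \<and> connected A \<and> x \<in> A \<and> A \<subseteq> Y \<and>
    (\<forall>a\<in>A. \<forall>j\<le>n. dist ((g ^^ j) x) ((g ^^ j) a) \<le> \<rho>) \<and>
    (\<exists>a\<in>A. \<exists>j\<le>n. \<rho> \<le> dist ((g ^^ j) x) ((g ^^ j) a))"
proof -
  define T where "T = {a \<in> Y. \<forall>j\<le>n. dist ((g ^^ j) x) ((g ^^ j) a) \<le> \<rho>}"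
  define U where "U = {a \<in> Y. \<forall>j\<le>n. dist ((g ^^ j) x) ((g ^^ j) a) < \<rho>}"
  have cont: "continuous_on Y (g ^^ j)" for j
    using continuous_on_funpow[OF g] Y(1) continuous_on_subset by blast
  have "T = (\<Inter>j\<in>{..n}. Y \<inter> (g ^^ j) -` cball ((g ^^ j) x) \<rho>)"
    unfolding T_def by auto
  then have "closed T"
    by (simp only:)
      (intro closed_INT ballI continuous_closed_preimage[OF cont compact_imp_closed[OF Y(2)] closed_cball])
  have "U = (\<Inter>j\<in>{..n}. Y \<inter> (g ^^ j) -` ball ((g ^^ j) x) \<rho>)"
    unfolding U_def by auto
  then have U_open: "openin (top_of_set Y) U"
    by (simp only:) (intro openin_INT2 continuous_openin_preimage_gen[OF cont open_ball]; simp)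
  have "x \<in> T"
    using Y(4) \<open>0 \<le> \<rho>\<close> unfolding T_def by simp
  have "T \<subset> Y"
    using Y(5) \<open>\<rho> < dist x y\<close> unfolding T_def by (force dest: spec[of _ 0])
  have "U \<subseteq> T"
    unfolding T_def U_def by auto
  from boundary_bumping_continuum[OF Y(2,3) \<open>closed T\<close> \<open>T \<subset> Y\<close> \<open>x \<in> T\<close> U_open this]
  obtain A where A: "compact A" "connected A" "x \<in> A" "A \<subseteq> T" "\<not> A \<subseteq> U"
    by blast
  then obtain a where "a \<in> A" "a \<in> T" "a \<notin> U"
    by blast
  then obtain j where "j \<le> n" "\<rho> \<le> dist ((g ^^ j) x) ((g ^^ j) a)"
    unfolding T_def U_def by (auto simp: not_less)
  with A \<open>a \<in> A\<close> show ?thesis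
    unfolding T_def by (intro exI[of _ A]) blast
qed

lemma space_locally_connected_at_continuum:
  fixes X :: "'a::metric_space set"
  assumes "compact X" "z \<in> X" "space_locally_connected_at X z" "\<epsilon> > 0"
  obtains K U where "K \<subseteq> X \<inter> cball z \<epsilon>" "compact K" "connected K"
    "openin (top_of_set X) U" "z \<in> U" "U \<subseteq> K"
proof -
  have "X \<inter> ball z \<epsilon> \<subseteq> X \<and> (\<exists>U. openin (top_of_set X) U \<and> z \<in> U \<and> U \<subseteq> X \<inter> ball z \<epsilon>)"
    using assms(2,4) by (auto intro!: exI[of _ "X \<inter> ball z \<epsilon>"] openin_open_Int)
  from assms(3)[unfolded space_locally_connected_at_def, rule_format, OF this]
  obtain C U where C: "C \<subseteq> X \<inter> ball z \<epsilon>" "connected C"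
    and U: "openin (top_of_set X) U" "z \<in> U" "U \<subseteq> C"
    by blast
  have "closure C \<subseteq> X \<inter> cball z \<epsilon>"
    using C(1) assms(1) by (intro closure_minimal) (auto intro: closed_Int compact_imp_closed)
  moreover from this have "compact (closure C)"
    using compact_Int_closed[OF assms(1)] by (metis closed_closure inf.absorb_iff2 le_infE)
  moreover have "connected (closure C)"
    using C(2) by (rule connected_imp_connected_closure)
  ultimately show thesis
    using that U closure_subset by blast
qed

section \<open>Continuum-wise expansivity\<close>

lemma diameter_le_of_subset_cball:
  fixes S :: "'a::metric_space set"
  assumes "S \<subseteq> cball a r" "0 \<le> r"
  shows "diameter S \<le> 2 * r"
proof -
  have "dist x y \<le> 2 * r" if "x \<in> S" "y \<in> S" for x y
  proof -
    have "dist a x \<le> r" "dist a y \<le> r"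
      using assms(1) that by auto
    then show ?thesis
      using dist_triangle3[of x y a] by linarith
  qed
  then show ?thesis
    unfolding diameter_def using assms(2) by (auto intro!: cSUP_least)
qed

definition cw_expansivity_constant :: "'a::metric_space set \<Rightarrow> ('a \<Rightarrow> 'a) \<Rightarrow> ('a \<Rightarrow> 'a) \<Rightarrow> real \<Rightarrow> bool" where
  "cw_expansivity_constant X f g c \<longleftrightarrow> (\<forall>C. C \<subseteq> X \<and> compact C \<and> connected C \<and> (\<exists>a\<in>C. \<exists>b\<in>C. a \<noteq> b)
      \<longrightarrow> (SUP n\<in>(UNIV::int set). ereal (diameter (zit f g n ` C))) > ereal c)"

lemma cw_expansive_iff: "cw_expansive X f g \<longleftrightarrow> (\<exists>c>0. cw_expansivity_constant X f g c)"
  unfolding cw_expansive_def cw_expansivity_constant_def ..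

lemma cw_expansivity_constant_trivial_continuum:
  assumes "cw_expansivity_constant X f g c" "C \<subseteq> X" "compact C" "connected C"
    and "\<And>n. diameter (zit f g n ` C) \<le> c" "a \<in> C" "b \<in> C"
  shows "a = b"
proof (rule ccontr)
  assume "a \<noteq> b"
  then have "(SUP n\<in>(UNIV::int set). ereal (diameter (zit f g n ` C))) > ereal c"
    using assms(1-4,6,7) unfolding cw_expansivity_constant_def by blast
  moreover have "(SUP n\<in>(UNIV::int set). ereal (diameter (zit f g n ` C))) \<le> ereal c"
    using assms(5) by (intro SUP_least) simp
  ultimately show False by simp
qed

lemma cw_expansivity_constant_limit_collapse:
  fixes X :: "'a::metric_space set"
  assumes X: "compact X" "homeomorphism X X f g" and c: "cw_expansivity_constant X f g c"
    and A: "\<And>i. A i \<subseteq> X" "\<And>i. connected (A i)" "\<And>i. w i \<in> A i" "\<And>i. v i \<in> A i"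
    and close: "\<And>i j. \<bar>j\<bar> \<le> int i \<Longrightarrow> zit f g j ` A i \<subseteq> cball (zit f g j (w i)) (c/2)"
    and lim: "w \<longlonglongrightarrow> w0" "v \<longlonglongrightarrow> v0"
  shows "w0 = v0"
proof -
  define L where "L = upper_limit A"
  have "w0 \<in> X"
    using closed_sequentially[OF compact_imp_closed[OF X(1)] _ lim(1)] A(1,3) by blast
  have "w0 \<in> L" "v0 \<in> L"
    unfolding L_def using A(3,4) lim by (auto intro: limit_in_upper_limit)
  have "L \<subseteq> X"
    unfolding L_def using A(1) X(1) by (intro upper_limit_subset_closed) (auto simp: compact_imp_closed)
  then have "compact L"
    using X(1) closed_upper_limit unfolding L_def by (metis compact_Int_closed inf.absorb_iff2)
  have "connected L"
    unfolding L_def by (rule connected_upper_limit[OF A(1) X(1) A(2,3) lim(1)])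
  have L_close: "zit f g j ` L \<subseteq> cball (zit f g j w0) (c/2)" for j
    unfolding L_def
  proof (rule upper_limit_image_subset_cball)
    show "continuous_on X (zit f g j)"
      using homeomorphism_zit[OF X(2)] by (rule homeomorphism_cont1)
    show "\<forall>\<^sub>F i in sequentially. zit f g j ` A i \<subseteq> cball (zit f g j (w i)) (c/2)"
      unfolding eventually_sequentially using close by (metis int_nat_eq nat_le_iff)
  qed (use X(1) A(1,3) lim(1) \<open>w0 \<in> X\<close> in \<open>auto simp: compact_imp_closed\<close>)
  then have "0 \<le> c/2"
    using \<open>w0 \<in> L\<close> by (metis image_eqI mem_cball dist_self subsetD)
  then have "diameter (zit f g j ` L) \<le> c" for j
    using diameter_le_of_subset_cball[OF L_close] by simp
  then show "w0 = v0"
    using cw_expansivity_constant_trivial_continuum[OF c \<open>L \<subseteq> X\<close> \<open>compact L\<close> \<open>connected L\<close>]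
      \<open>w0 \<in> L\<close> \<open>v0 \<in> L\<close> by blast
qed

lemma cw_expansivity_constant_small_continua:
  fixes X :: "'a::metric_space set"
  assumes X: "compact X" "homeomorphism X X f g" and c: "cw_expansivity_constant X f g c"
    and "\<mu> > 0"
  shows "\<exists>N. \<forall>A w. A \<subseteq> X \<longrightarrow> compact A \<longrightarrow> connected A \<longrightarrow> w \<in> A \<longrightarrow>
    (\<forall>j. \<bar>j\<bar> \<le> int N \<longrightarrow> zit f g j ` A \<subseteq> cball (zit f g j w) (c/2)) \<longrightarrow> A \<subseteq> ball w \<mu>"
proof (rule ccontr)
  assume contra: "\<not> ?thesis"
  have "\<exists>A w v. A \<subseteq> X \<and> connected A \<and> w \<in> A \<and> v \<in> A \<and> \<mu> \<le> dist w v \<and>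
    (\<forall>j. \<bar>j\<bar> \<le> int N \<longrightarrow> zit f g j ` A \<subseteq> cball (zit f g j w) (c/2))" for N
  proof -
    obtain A w where "A \<subseteq> X" "compact A" "connected A" "w \<in> A"
      "\<forall>j. \<bar>j\<bar> \<le> int N \<longrightarrow> zit f g j ` A \<subseteq> cball (zit f g j w) (c/2)" "\<not> A \<subseteq> ball w \<mu>"
      using contra by (simp only: not_ex not_all not_imp) (elim allE[of _ N] exE conjE)
    then show ?thesis
      by (auto simp: subset_iff not_less)
  qed
  then obtain A w v where A: "\<And>N. A N \<subseteq> X" "\<And>N. connected (A N)"
    "\<And>N. w N \<in> A N" "\<And>N. v N \<in> A N" "\<And>N. \<mu> \<le> dist (w N) (v N)"
    and close: "\<And>N j. \<bar>j\<bar> \<le> int N \<Longrightarrow> zit f g j ` A N \<subseteq> cball (zit f g j (w N)) (c/2)"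
    by metis
  have "\<forall>N. (w N, v N) \<in> X \<times> X"
    using A(1,3,4) by blast
  then obtain l r where l: "strict_mono r" "((\<lambda>N. (w N, v N)) \<circ> r) \<longlonglongrightarrow> l"
    using seq_compactE[OF compact_imp_seq_compact[OF compact_Times[OF X(1) X(1)]]] by metis
  have lim: "(\<lambda>i. w (r i)) \<longlonglongrightarrow> fst l" "(\<lambda>i. v (r i)) \<longlonglongrightarrow> snd l"
    using tendsto_fst[OF l(2)] tendsto_snd[OF l(2)] by (simp_all add: comp_def)
  have "\<bar>j\<bar> \<le> int (r i)" if "\<bar>j\<bar> \<le> int i" for i j
    using seq_suble[OF l(1), of i] that by linarith
  then have "fst l = snd l"
    using cw_expansivity_constant_limit_collapse[OF X c, of "\<lambda>i. A (r i)", OF _ _ _ _ _ lim] A close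
    by blast
  moreover have "\<mu> \<le> dist (fst l) (snd l)"
    using tendsto_dist[OF lim] A(5) by (auto intro: LIMSEQ_le_const)
  ultimately show False
    using \<open>\<mu> > 0\<close> by simp
qed

lemma cw_expansivity_constant_small_continua_shifted:
  fixes X :: "'a::metric_space set"
  assumes X: "compact X" "homeomorphism X X f g" and c: "cw_expansivity_constant X f g c"
    and "\<mu> > 0"
  shows "\<exists>N. \<forall>A x n. A \<subseteq> X \<longrightarrow> compact A \<longrightarrow> connected A \<longrightarrow> x \<in> A \<longrightarrow>
    (\<forall>k \<ge> - int n. zit f g k ` A \<subseteq> cball (zit f g k x) (c/2)) \<longrightarrow>
    (\<forall>j \<ge> int N - int n. zit f g j ` A \<subseteq> ball (zit f g j x) \<mu>)"
proof -
  from cw_expansivity_constant_small_continua[OF assms]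
  obtain N where N: "\<forall>A w. A \<subseteq> X \<longrightarrow> compact A \<longrightarrow> connected A \<longrightarrow> w \<in> A \<longrightarrow>
    (\<forall>j. \<bar>j\<bar> \<le> int N \<longrightarrow> zit f g j ` A \<subseteq> cball (zit f g j w) (c/2)) \<longrightarrow> A \<subseteq> ball w \<mu>"
    ..
  have "zit f g j ` A \<subseteq> ball (zit f g j x) \<mu>"
    if A: "A \<subseteq> X" "compact A" "connected A" "x \<in> A"
      and close: "\<forall>k \<ge> - int n. zit f g k ` A \<subseteq> cball (zit f g k x) (c/2)"
      and j: "j \<ge> int N - int n" for A x n j
  proof (rule N[rule_format])
    have hom: "homeomorphism X X (zit f g j) (zit f g (- j))"
      by (rule homeomorphism_zit[OF X(2)])
    show "zit f g j ` A \<subseteq> X"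
      using A(1) homeomorphism_image1[OF hom] by blast
    show "compact (zit f g j ` A)" "connected (zit f g j ` A)"
      using A continuous_on_subset[OF homeomorphism_cont1[OF hom]]
      by (auto intro: compact_continuous_image connected_continuous_image)
    show "zit f g j x \<in> zit f g j ` A"
      using A(4) by blast
    fix k :: int assume "\<bar>k\<bar> \<le> int N"
    then have "k + j \<ge> - int n"
      using j by linarith
    moreover have shift: "zit f g (k + j) y = zit f g k (zit f g j y)" if "y \<in> A" for y
      using zit_add[OF X(2)] A(1) that by blast
    ultimately show "zit f g k ` zit f g j ` A \<subseteq> cball (zit f g k (zit f g j x)) (c/2)"
      using close A(4) by (simp add: image_image shift[symmetric])
  qed
  then show ?thesis by blast
qed

lemma cw_expansivity_constant_backward_shadowing:
  fixes X :: "'a::metric_space set"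
  assumes X: "compact X" "homeomorphism X X f g" and c: "cw_expansivity_constant X f g c"
    and "\<rho> > 0"
  shows "\<exists>\<eta>>0. \<forall>A x n. A \<subseteq> X \<longrightarrow> compact A \<longrightarrow> connected A \<longrightarrow> x \<in> A \<longrightarrow>
    (\<forall>k \<ge> - int n. zit f g k ` A \<subseteq> cball (zit f g k x) (c/2)) \<longrightarrow>
    (\<forall>a\<in>A. dist ((g ^^ n) x) ((g ^^ n) a) < \<eta>) \<longrightarrow>
    (\<forall>a\<in>A. \<forall>j\<le>n. dist ((g ^^ j) x) ((g ^^ j) a) < \<rho>)"
proof -
  from cw_expansivity_constant_small_continua_shifted[OF assms]
  obtain N where N: "\<forall>A x n. A \<subseteq> X \<longrightarrow> compact A \<longrightarrow> connected A \<longrightarrow> x \<in> A \<longrightarrow>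
    (\<forall>k \<ge> - int n. zit f g k ` A \<subseteq> cball (zit f g k x) (c/2)) \<longrightarrow>
    (\<forall>j \<ge> int N - int n. zit f g j ` A \<subseteq> ball (zit f g j x) \<rho>)" ..
  have "continuous_on X f" "f ` X \<subseteq> X"
    using X(2) by (auto simp: homeomorphism_def)
  from uniformly_equicontinuous_funpow[OF X(1) this \<open>\<rho> > 0\<close>]
  obtain \<eta> where \<eta>: "\<eta> > 0"
    "\<forall>i<N. \<forall>u\<in>X. \<forall>v\<in>X. dist u v < \<eta> \<longrightarrow> dist ((f ^^ i) u) ((f ^^ i) v) < \<rho>"
    by blast
  have "dist ((g ^^ j) x) ((g ^^ j) a) < \<rho>"
    if A: "A \<subseteq> X" "compact A" "connected A" "x \<in> A" "a \<in> A" "j \<le> n"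
      and shadow: "\<forall>k \<ge> - int n. zit f g k ` A \<subseteq> cball (zit f g k x) (c/2)"
      and near: "\<forall>a\<in>A. dist ((g ^^ n) x) ((g ^^ n) a) < \<eta>" for A x n a j
  proof (cases "j + N \<le> n")
    case True
    then have "- int j \<ge> int N - int n"
      by linarith
    then have "zit f g (- int j) ` A \<subseteq> ball (zit f g (- int j) x) \<rho>"
      using N A(1-4) shadow by blast
    then show ?thesis
      using A(5) by auto
  next
    case False
    have "(g ^^ j) y = (f ^^ (n - j)) ((g ^^ n) y)" if "y \<in> X" for y
    proof -
      have "(g ^^ j) y \<in> X"
        using homeomorphism_funpow_mem[OF X(2) that] by blast
      moreover have "g ^^ n = g ^^ (n - j) \<circ> g ^^ j"
        using A(6) by (simp flip: funpow_add)
      ultimately show ?thesis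
        using homeomorphism_apply2[OF homeomorphism_funpow[OF X(2)]] by simp
    qed
    moreover have "(g ^^ n) y \<in> X" if "y \<in> X" for y
      using homeomorphism_funpow_mem[OF X(2) that] by blast
    moreover have "n - j < N"
      using False A(6) by linarith
    ultimately show ?thesis
      using \<eta>(2) near A(1,4,5) by (simp add: subset_iff)
  qed
  then show ?thesis
    using \<eta>(1) by blast
qed

section \<open>Sinks and recurrence\<close>

lemma weak_sink_ball:
  assumes "weak_sink X f x" "e > 0"
  obtains s where "s > 0" "X \<inter> ball x s \<subseteq> local_stable_set X f e x"
proof -
  obtain U where U: "openin (top_of_set X) U" "x \<in> U" "U \<subseteq> local_stable_set X f e x"
    using assms unfolding weak_sink_def nbhd_in_def by blast
  then obtain s where "s > 0" "\<forall>y\<in>X. dist y x < s \<longrightarrow> y \<in> U"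
    unfolding openin_euclidean_subtopology_iff by blast
  then have "X \<inter> ball x s \<subseteq> local_stable_set X f e x"
    using U(3) by (auto simp: dist_commute)
  with \<open>s > 0\<close> show thesis
    by (rule that)
qed

lemma backward_close_imp_shadowing:
  assumes stable: "X \<inter> cball x \<rho> \<subseteq> local_stable_set X f e x" and "\<rho> \<le> e"
    and a: "a \<in> X" "\<forall>j\<le>n. dist ((g ^^ j) x) ((g ^^ j) a) \<le> \<rho>" and "k \<ge> - int n"
  shows "dist (zit f g k x) (zit f g k a) \<le> e"
proof (cases "k \<ge> 0")
  case True
  have "a \<in> local_stable_set X f e x"
    using stable a by fastforce
  then show ?thesis
    using True unfolding local_stable_set_def zit_def by simp
next
  case False
  then have "nat (- k) \<le> n" "zit f g k = g ^^ nat (- k)"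
    using \<open>k \<ge> - int n\<close> by (auto simp: zit_def)
  then show ?thesis
    using a(2) \<open>\<rho> \<le> e\<close> by force
qed

lemma alpha_limit_locally_connected_continuum:
  fixes X :: "'a::metric_space set"
  assumes X: "compact X" "homeomorphism X X f g" "x \<in> X"
    and z: "z \<in> alpha_limit g x" "space_locally_connected_at X z" and "\<eta> > 0"
  shows "\<exists>n p Y. M \<le> p \<and> Y \<subseteq> X \<and> compact Y \<and> connected Y \<and> x \<in> Y \<and> (f ^^ p) x \<in> Y \<and>
    (\<forall>y\<in>Y. dist ((g ^^ n) x) ((g ^^ n) y) < \<eta>)"
proof -
  have hom: "homeomorphism X X (f ^^ k) (g ^^ k)" for k
    using homeomorphism_funpow[OF X(2)] .
  have orbit: "(g ^^ k) x \<in> X" for k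
    using homeomorphism_funpow_mem[OF X(2,3)] by blast
  obtain r where r: "strict_mono r" "(\<lambda>k. (g ^^ r k) x) \<longlonglongrightarrow> z"
    using z(1) unfolding alpha_limit_def by blast
  have "z \<in> X"
    using closed_sequentially[OF compact_imp_closed[OF X(1)] _ r(2)] orbit by blast
  then obtain K U where K: "K \<subseteq> X \<inter> cball z (\<eta>/4)" "compact K" "connected K"
    and U: "openin (top_of_set X) U" "z \<in> U" "U \<subseteq> K"
    using space_locally_connected_at_continuum[OF X(1) _ z(2), of "\<eta>/4"] \<open>\<eta> > 0\<close> by auto
  obtain G where "open G" "U = X \<inter> G"
    using U(1) unfolding openin_open by blast
  then have "\<forall>\<^sub>F k in sequentially. (g ^^ r k) x \<in> K"
    using topological_tendstoD[OF r(2)] U(2,3) orbit by (fastforce elim: eventually_mono)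
  then obtain k0 where k0: "\<And>k. k \<ge> k0 \<Longrightarrow> (g ^^ r k) x \<in> K"
    unfolding eventually_sequentially by blast
  define m where "m = r k0"
  define n where "n = r (k0 + m + M)"
  have "m + M \<le> n"
    using seq_suble[OF r(1), of "k0 + m + M"] unfolding n_def by linarith
  have gm: "(g ^^ m) x \<in> K" and gn: "(g ^^ n) x \<in> K"
    using k0[of k0] k0[of "k0 + m + M"] unfolding m_def n_def by simp_all
  define Y where "Y = (f ^^ n) ` K"
  have "Y \<subseteq> X"
    unfolding Y_def using K(1) hom[of n] by (auto intro: homeomorphism_image_mem)
  moreover have "compact Y" "connected Y"
    unfolding Y_def using K continuous_on_subset[OF homeomorphism_cont1[OF hom]]
    by (auto intro: compact_continuous_image connected_continuous_image)
  moreover have "x \<in> Y"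
    using gn homeomorphism_apply2[OF hom X(3)] unfolding Y_def by (metis image_eqI)
  moreover have "(f ^^ (n - m)) x \<in> Y"
  proof -
    have "(f ^^ n) ((g ^^ m) x) = (f ^^ (n - m)) ((f ^^ m) ((g ^^ m) x))"
      using \<open>m + M \<le> n\<close> by (simp flip: funpow_add comp_apply[of "f ^^ (n - m)"])
    then have "(f ^^ n) ((g ^^ m) x) = (f ^^ (n - m)) x"
      using homeomorphism_apply2[OF hom X(3)] by simp
    then show ?thesis
      using gm unfolding Y_def by (metis image_eqI)
  qed
  moreover have "dist ((g ^^ n) x) ((g ^^ n) y) < \<eta>" if y: "y \<in> Y" for y
  proof -
    obtain c where c: "c \<in> K" "y = (f ^^ n) c"
      using y unfolding Y_def by blast
    then have "(g ^^ n) y = c"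
      using K(1) homeomorphism_apply1[OF hom] by blast
    moreover have "dist z c \<le> \<eta>/4" "dist z ((g ^^ n) x) \<le> \<eta>/4"
      using K(1) c(1) gn by auto
    ultimately show ?thesis
      using dist_triangle3[of "(g ^^ n) x" c z] \<open>\<eta> > 0\<close> by simp
  qed
  moreover have "M \<le> n - m"
    using \<open>m + M \<le> n\<close> by linarith
  ultimately show ?thesis
    by blast
qed

definition recurrent :: "('a::metric_space \<Rightarrow> 'a) \<Rightarrow> 'a \<Rightarrow> bool" where
  "recurrent f x \<longleftrightarrow> (\<forall>r>0. \<exists>\<^sub>F n in sequentially. dist ((f ^^ n) x) x < r)"

lemma cw_expansive_weak_sink_recurrent:
  fixes X :: "'a::metric_space set"
  assumes X: "compact X" "homeomorphism X X f g"
    and c: "cw_expansivity_constant X f g c" "c > 0"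
    and x: "x \<in> X" "weak_sink X f x"
    and z: "z \<in> alpha_limit g x" "space_locally_connected_at X z"
  shows "recurrent f x"
proof (rule ccontr)
  assume "\<not> recurrent f x"
  then obtain r M where "r > 0" and far: "\<And>p. p \<ge> M \<Longrightarrow> r \<le> dist ((f ^^ p) x) x"
    unfolding recurrent_def frequently_sequentially by (auto simp: not_less)
  obtain s where "s > 0" and s: "X \<inter> ball x s \<subseteq> local_stable_set X f (c/2) x"
    using weak_sink_ball[OF x(2)] c(2) by (metis half_gt_zero)
  define \<rho> where "\<rho> = min (s/2) (min (r/2) (c/2))"
  have "\<rho> > 0" "\<rho> < r" "\<rho> \<le> c/2"
    using \<open>s > 0\<close> \<open>r > 0\<close> c(2) unfolding \<rho>_def by auto
  have stable: "X \<inter> cball x \<rho> \<subseteq> local_stable_set X f (c/2) x"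
    using s \<open>s > 0\<close> unfolding \<rho>_def by auto
  from cw_expansivity_constant_backward_shadowing[OF X c(1) \<open>\<rho> > 0\<close>]
  obtain \<eta> where "\<eta> > 0" and shadowing: "\<forall>A x n. A \<subseteq> X \<longrightarrow> compact A \<longrightarrow> connected A \<longrightarrow> x \<in> A \<longrightarrow>
    (\<forall>k \<ge> - int n. zit f g k ` A \<subseteq> cball (zit f g k x) (c/2)) \<longrightarrow>
    (\<forall>a\<in>A. dist ((g ^^ n) x) ((g ^^ n) a) < \<eta>) \<longrightarrow>
    (\<forall>a\<in>A. \<forall>j\<le>n. dist ((g ^^ j) x) ((g ^^ j) a) < \<rho>)"
    by blast
  from alpha_limit_locally_connected_continuum[OF X x(1) z \<open>\<eta> > 0\<close>, of M]
  obtain n p Y where "M \<le> p" and Y: "Y \<subseteq> X" "compact Y" "connected Y" "x \<in> Y" "(f ^^ p) x \<in> Y"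
    and near: "\<forall>y\<in>Y. dist ((g ^^ n) x) ((g ^^ n) y) < \<eta>"
    by blast
  have g: "continuous_on X g" "g ` X \<subseteq> X"
    using X(2) by (auto simp: homeomorphism_def)
  have "\<rho> < dist x ((f ^^ p) x)"
    using far[OF \<open>M \<le> p\<close>] \<open>\<rho> < r\<close> by (simp add: dist_commute)
  from backward_ball_boundary_continuum[OF g Y less_imp_le[OF \<open>\<rho> > 0\<close>] this, of n]
  obtain A where A: "compact A" "connected A" "x \<in> A" "A \<subseteq> Y"
    and inside: "\<forall>a\<in>A. \<forall>j\<le>n. dist ((g ^^ j) x) ((g ^^ j) a) \<le> \<rho>"
    and boundary: "\<exists>a\<in>A. \<exists>j\<le>n. \<rho> \<le> dist ((g ^^ j) x) ((g ^^ j) a)"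
    by blast
  have "zit f g k ` A \<subseteq> cball (zit f g k x) (c/2)" if "k \<ge> - int n" for k
    using backward_close_imp_shadowing[where g = g, OF stable \<open>\<rho> \<le> c/2\<close> _ _ that] inside A(4) Y(1)
    by fastforce
  then have "\<forall>a\<in>A. \<forall>j\<le>n. dist ((g ^^ j) x) ((g ^^ j) a) < \<rho>"
    using shadowing A Y(1) near by blast
  with boundary show False
    by force
qed

lemma recurrent_stable_iterate_eq:
  fixes X :: "'a::metric_space set"
  assumes f: "continuous_on X f" "f ` X \<subseteq> X" and x: "x \<in> X" "recurrent f x"
    and stable: "(f ^^ p) x \<in> stable_set X f x"
  shows "(f ^^ p) x = x"
proof (rule ccontr)
  assume "(f ^^ p) x \<noteq> x"
  define D where "D = dist ((f ^^ p) x) x"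
  have "D > 0"
    using \<open>(f ^^ p) x \<noteq> x\<close> unfolding D_def by simp
  then obtain \<tau> where "\<tau> > 0" and \<tau>: "\<forall>y\<in>X. dist y x < \<tau> \<longrightarrow> dist ((f ^^ p) y) ((f ^^ p) x) < D/3"
    using continuous_on_funpow[OF f] x(1) unfolding continuous_on_iff by (metis divide_pos_pos zero_less_numeral)
  have "(\<lambda>m. dist ((f ^^ m) x) ((f ^^ m) ((f ^^ p) x))) \<longlonglongrightarrow> 0"
    using stable unfolding stable_set_def by blast
  from LIMSEQ_D[OF this, of "D/3"] \<open>D > 0\<close>
  obtain M where M: "\<And>m. m \<ge> M \<Longrightarrow> dist ((f ^^ m) x) ((f ^^ m) ((f ^^ p) x)) < D/3"
    by auto
  obtain q where "q \<ge> M" and q: "dist ((f ^^ q) x) x < min \<tau> (D/3)"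
    using x(2) \<open>\<tau> > 0\<close> \<open>D > 0\<close> unfolding recurrent_def frequently_sequentially
    by (metis min_less_iff_conj divide_pos_pos zero_less_numeral)
  have "(f ^^ q) ((f ^^ p) x) = (f ^^ p) ((f ^^ q) x)"
    by (metis add.commute comp_apply funpow_add)
  then have "dist ((f ^^ q) x) ((f ^^ p) ((f ^^ q) x)) < D/3"
    using M[OF \<open>q \<ge> M\<close>] by simp
  moreover have "dist ((f ^^ p) ((f ^^ q) x)) ((f ^^ p) x) < D/3"
    using \<tau> funpow_image_subset[OF f(2)] x(1) q by auto
  moreover have "D \<le> dist ((f ^^ p) ((f ^^ q) x)) ((f ^^ p) x)
      + dist ((f ^^ q) x) ((f ^^ p) ((f ^^ q) x)) + dist ((f ^^ q) x) x"
    unfolding D_def using dist_triangle[of "(f ^^ p) x" x "(f ^^ p) ((f ^^ q) x)"]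
      dist_triangle[of "(f ^^ p) ((f ^^ q) x)" x "(f ^^ q) x"] by (simp add: dist_commute)
  ultimately show False
    using q by linarith
qed

lemma sink_recurrent_imp_periodic:
  fixes X :: "'a::metric_space set"
  assumes f: "continuous_on X f" "f ` X \<subseteq> X" and x: "x \<in> X" "sink X f x" "recurrent f x"
  shows "\<exists>n>0. (f ^^ n) x = x"
proof -
  obtain \<epsilon> where "\<epsilon> > 0" and \<epsilon>: "local_stable_set X f \<epsilon> x \<subseteq> stable_set X f x"
    using x(2) unfolding sink_def by blast
  obtain s where "s > 0" and s: "X \<inter> ball x s \<subseteq> local_stable_set X f \<epsilon> x"
    using x(2) \<open>\<epsilon> > 0\<close> unfolding sink_def by (metis weak_sink_ball)
  obtain p where "p \<ge> 1" "dist ((f ^^ p) x) x < s"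
    using x(3) \<open>s > 0\<close> unfolding recurrent_def frequently_sequentially by blast
  then have "(f ^^ p) x \<in> X \<inter> ball x s"
    using funpow_image_subset[OF f(2)] x(1) by (auto simp: dist_commute)
  then have "(f ^^ p) x = x"
    using recurrent_stable_iterate_eq[OF f x(1,3)] s \<epsilon> by blast
  then show ?thesis
    using \<open>p \<ge> 1\<close> by (intro exI[of _ p]) simp
qed

theorem mainTheorem8:
  fixes X :: "'a::metric_space set" and f g :: "'a \<Rightarrow> 'a" and x z :: 'a
  assumes "compact X"
    and "homeomorphism X X f g"
    and "cw_expansive X f g"
    and "x \<in> X"
    and "sink X f x"
    and "z \<in> alpha_limit g x"
    and "space_locally_connected_at X z"
  shows "\<exists>n>0. (f ^^ n) x = x"
proof -
  obtain c where "c > 0" "cw_expansivity_constant X f g c"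
    using assms(3) unfolding cw_expansive_iff by blast
  then have "recurrent f x"
    using cw_expansive_weak_sink_recurrent assms(1,2,4,6,7) assms(5)[unfolded sink_def] by blast
  moreover have "continuous_on X f" "f ` X \<subseteq> X"
    using assms(2) by (auto simp: homeomorphism_def)
  ultimately show ?thesis
    using sink_recurrent_imp_periodic assms(4,5) by blast
qed

end
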